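(* For integers $k\ge1$ and $0\le m\le k$, $$C_{1/2,m}(k):=\sum_{j=0}^m(-1)^j\binom{m}{j}\binom{j/2}{k}=(-1)^k\,\frac{2^{-2k+m}\,m}{2k-m}\binom{2k-m}{k}.$$
   Context: For real $x$ and $k\in\mathbb{N}$, $\binom{x}{k}=x(x-1)\cdots(x-k+1)/k!$. *)

theory Defs
  imports Complex_Main
begin

end

theory Submission
  imports Defs
begin

text \<open>The sum is the \<open>m\<close>-th iterate of the difference operator
  \<open>f \<mapsto> (j \<mapsto> f j - f (j + 1))\<close>, evaluated at \<open>0\<close>, on \<open>f\<^sub>k j = (j/2 gchoose k)\<close>.
  Pascal's rule in the form \<open>f\<^sub>k\<^sub>+\<^sub>1 (j + 2) = f\<^sub>k\<^sub>+\<^sub>1 j + f\<^sub>k j\<close> gives the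
  recurrence \<open>C\<^sub>m\<^sub>+\<^sub>2(k+1) = 2 C\<^sub>m\<^sub>+\<^sub>1(k+1) + C\<^sub>m(k)\<close>; the closed form satisfies the same
  recurrence and agrees with \<open>C\<close> for \<open>m = 0\<close> and \<open>m = 1\<close>, the latter being
  the classical value of \<open>1/2 gchoose k\<close>.\<close>

definition neg_diff :: "(nat \<Rightarrow> 'a::ab_group_add) \<Rightarrow> nat \<Rightarrow> 'a" where
  "neg_diff f = (\<lambda>j. f j - f (Suc j))"

lemma neg_diff_iterate_eq_sum:
  fixes f :: "nat \<Rightarrow> 'a::comm_ring_1"
  shows "(neg_diff ^^ m) f j = (\<Sum>i\<le>m. (-1) ^ i * of_nat (m choose i) * f (j + i))"
proof (induction m arbitrary: j)
  case 0
  then show ?case by simp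
next
  case (Suc m)
  define g where "g i = (-1) ^ i * of_nat (m choose i) * f (j + i)" for i
  have shift: "(\<Sum>i\<le>m. g i) = f j + (\<Sum>i\<le>m. g (Suc i))"
  proof -
    have "(\<Sum>i\<le>m. g i) = (\<Sum>i\<le>Suc m. g i)"
      by (simp add: g_def binomial_eq_0)
    also have "\<dots> = f j + (\<Sum>i\<le>m. g (Suc i))"
      by (subst sum.atMost_Suc_shift) (simp add: g_def)
    finally show ?thesis .
  qed
  have "(neg_diff ^^ Suc m) f j = (neg_diff ^^ m) f j - (neg_diff ^^ m) f (Suc j)"
    by (simp add: neg_diff_def)
  also have "\<dots> = (\<Sum>i\<le>m. g i) - (\<Sum>i\<le>m. (-1) ^ i * of_nat (m choose i) * f (j + Suc i))"
    using Suc by (simp add: g_def)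
  also have "\<dots> = f j + ((\<Sum>i\<le>m. g (Suc i)) - (\<Sum>i\<le>m. (-1) ^ i * of_nat (m choose i) * f (j + Suc i)))"
    by (simp add: shift)
  also have "\<dots> = f j + (\<Sum>i\<le>m. (-1) ^ Suc i * of_nat (Suc m choose Suc i) * f (j + Suc i))"
    unfolding g_def sum_subtractf[symmetric]
    by (intro arg_cong2[where f="(+)"] sum.cong) (simp_all add: algebra_simps)
  also have "\<dots> = (\<Sum>i\<le>Suc m. (-1) ^ i * of_nat (Suc m choose i) * f (j + i))"
    by (subst sum.atMost_Suc_shift) simp
  finally show ?case .
qed

lemma neg_diff_iterate_linear:
  fixes f g :: "nat \<Rightarrow> 'a::ring"
  shows "(neg_diff ^^ m) (\<lambda>j. a * f j + g j) = (\<lambda>j. a * (neg_diff ^^ m) f j + (neg_diff ^^ m) g j)"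
  by (induction m) (auto simp: neg_diff_def algebra_simps)

definition half_gchoose_diff :: "nat \<Rightarrow> nat \<Rightarrow> real" where
  "half_gchoose_diff m k = (neg_diff ^^ m) (\<lambda>j. real j / 2 gchoose k) 0"

lemma neg_diff_twice_half_gchoose:
  "neg_diff (neg_diff (\<lambda>j. real j / 2 gchoose Suc k))
     = (\<lambda>j. 2 * neg_diff (\<lambda>j. real j / 2 gchoose Suc k) j + (real j / 2 gchoose k))"
proof
  fix j
  have "real (Suc (Suc j)) / 2 = real j / 2 + 1" by simp
  then have "real (Suc (Suc j)) / 2 gchoose Suc k = (real j / 2 gchoose k) + (real j / 2 gchoose Suc k)"
    by (simp only: gbinomial_Suc_Suc)
  then show "neg_diff (neg_diff (\<lambda>j. real j / 2 gchoose Suc k)) j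
      = 2 * neg_diff (\<lambda>j. real j / 2 gchoose Suc k) j + (real j / 2 gchoose k)"
    by (simp add: neg_diff_def)
qed

lemma half_gchoose_diff_rec:
  "half_gchoose_diff (Suc (Suc m)) (Suc k) = 2 * half_gchoose_diff (Suc m) (Suc k) + half_gchoose_diff m k"
proof -
  let ?f = "\<lambda>j. real j / 2 gchoose Suc k"
  have "(neg_diff ^^ Suc (Suc m)) ?f = (neg_diff ^^ m) (neg_diff (neg_diff ?f))"
    by (simp add: funpow_Suc_right del: funpow.simps)
  also have "\<dots> = (\<lambda>j. 2 * (neg_diff ^^ Suc m) ?f j + (neg_diff ^^ m) (\<lambda>j. real j / 2 gchoose k) j)"
    by (simp add: neg_diff_twice_half_gchoose neg_diff_iterate_linear funpow_Suc_right del: funpow.simps)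
  finally show ?thesis
    unfolding half_gchoose_diff_def by simp
qed

text \<open>The right-hand side of the theorem with \<open>binomial\<close> and \<open>powi\<close> written out in factorials.\<close>

definition half_gchoose_diff_closed :: "nat \<Rightarrow> nat \<Rightarrow> real" where
  "half_gchoose_diff_closed m k
     = (-1) ^ k * 2 ^ m * real m * fact (2 * k - m - 1) / (4 ^ k * fact k * fact (k - m))"

lemma one_half_gchoose_Suc:
  "((1/2::real) gchoose Suc k) = - half_gchoose_diff_closed 1 (Suc k)"
proof (induction k)
  case 0
  then show ?case by (simp add: half_gchoose_diff_closed_def)
next
  case (Suc k)
  let ?r = "- (real (2 * k + 2) * real (2 * k + 1)) / (4 * real (Suc (Suc k)) * real (Suc k))"
  have fact_step: "fact (2 * Suc (Suc k) - 1 - 1)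
      = real (2 * k + 2) * real (2 * k + 1) * (fact (2 * Suc k - 1 - 1) :: real)"
  proof -
    have "2 * Suc (Suc k) - 1 - 1 = Suc (Suc (2 * k))" "2 * Suc k - 1 - 1 = 2 * k" by simp_all
    then show ?thesis by (simp add: algebra_simps)
  qed
  have closed_step:
    "half_gchoose_diff_closed 1 (Suc (Suc k)) = half_gchoose_diff_closed 1 (Suc k) * ?r"
    unfolding half_gchoose_diff_closed_def using fact_step
    by (simp add: field_simps) (simp add: divide_simps algebra_simps)
  have ratio: "(1/2 - real (Suc k)) / real (Suc (Suc k)) = ?r"
    by (simp add: divide_simps del: of_nat_Suc) (simp add: algebra_simps)
  have "(1/2::real) gchoose Suc (Suc k)
      = (1/2 - real (Suc k)) / real (Suc (Suc k)) * ((1/2) gchoose Suc k)"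
    using gbinomial_mult_1[of "1/2::real" "Suc k"] by (simp add: field_simps)
  also have "\<dots> = - (half_gchoose_diff_closed 1 (Suc k) * ?r)"
    unfolding ratio Suc.IH by simp
  finally show ?case
    unfolding closed_step .
qed

lemma half_gchoose_diff_closed_rec:
  "half_gchoose_diff_closed (n + 2) (n + 2 + t)
     = 2 * half_gchoose_diff_closed (n + 1) (n + 2 + t) + half_gchoose_diff_closed n (n + 1 + t)"
proof -
  define F where "F = (fact (n + 2 * t + 1) :: real)"
  define K where "K = (fact (n + 1 + t) :: real)"
  define T where "T = (fact t :: real)"
  define P where "P = (4::real) ^ (n + 1 + t)"
  define S where "S = (-1::real) ^ (n + 1 + t)"
  have pos: "F > 0" "K > 0" "T > 0" "P > 0"
    unfolding F_def K_def T_def P_def by simp_all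
  have fact_K: "fact (n + 2 + t) = real (n + 2 + t) * K"
    unfolding K_def by (simp add: add.commute add.left_commute)
  have pow: "(-1::real) ^ (n + 2 + t) = - S" "(4::real) ^ (n + 2 + t) = 4 * P"
    unfolding S_def P_def by (simp_all add: add.commute add.left_commute)
  have e1: "half_gchoose_diff_closed (n + 2) (n + 2 + t)
      = - S * 2 ^ (n + 2) * real (n + 2) * F / (4 * P * (real (n + 2 + t) * K) * T)"
  proof -
    have "2 * (n + 2 + t) - (n + 2) - 1 = n + 2 * t + 1" "n + 2 + t - (n + 2) = t" by simp_all
    then show ?thesis
      unfolding half_gchoose_diff_closed_def F_def T_def fact_K pow by (simp add: algebra_simps)
  qed
  have e2: "half_gchoose_diff_closed (n + 1) (n + 2 + t)
      = - S * 2 ^ (n + 1) * real (n + 1) * (real (n + 2 * t + 2) * F)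
          / (4 * P * (real (n + 2 + t) * K) * (real (t + 1) * T))"
  proof -
    have "2 * (n + 2 + t) - (n + 1) - 1 = Suc (n + 2 * t + 1)" "n + 2 + t - (n + 1) = Suc t" by simp_all
    then show ?thesis
      unfolding half_gchoose_diff_closed_def F_def T_def fact_K pow by (simp add: algebra_simps)
  qed
  have e3: "half_gchoose_diff_closed n (n + 1 + t) = S * 2 ^ n * real n * F / (P * K * (real (t + 1) * T))"
  proof -
    have "2 * (n + 1 + t) - n - 1 = n + 2 * t + 1" "n + 1 + t - n = Suc t" by simp_all
    then show ?thesis
      unfolding half_gchoose_diff_closed_def F_def T_def K_def S_def P_def by (simp add: algebra_simps)
  qed
  have "real (n + 2 + t) > 0" "real (t + 1) > 0" by simp_all
  then show ?thesis
    unfolding e1 e2 e3 using pos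
    by (simp add: divide_simps del: of_nat_add) (simp add: algebra_simps)
qed

lemma half_gchoose_diff_eq_closed:
  "1 \<le> k \<Longrightarrow> m \<le> k \<Longrightarrow> half_gchoose_diff m k = half_gchoose_diff_closed m k"
proof (induction m arbitrary: k rule: induct_nat_012)
  case 0
  then show ?case
    by (simp add: half_gchoose_diff_def half_gchoose_diff_closed_def gbinomial_0_left)
next
  case 1
  then obtain k' where "k = Suc k'" by (cases k) auto
  then show ?case
    using one_half_gchoose_Suc[of k'] by (simp add: half_gchoose_diff_def neg_diff_def)
next
  case (ge2 n)
  then obtain t where k: "k = n + 2 + t"
    using le_Suc_ex[of "n + 2" k] by auto
  have "half_gchoose_diff (Suc (Suc n)) k
      = 2 * half_gchoose_diff (n + 1) (n + 2 + t) + half_gchoose_diff n (n + 1 + t)"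
    using half_gchoose_diff_rec[of n "n + 1 + t"] k by simp
  also have "\<dots> = 2 * half_gchoose_diff_closed (n + 1) (n + 2 + t)
      + half_gchoose_diff_closed n (n + 1 + t)"
    using ge2.IH k by simp
  also have "\<dots> = half_gchoose_diff_closed (n + 2) (n + 2 + t)"
    by (rule half_gchoose_diff_closed_rec[symmetric])
  finally show ?case
    using k by simp
qed

lemma half_gchoose_diff_closed_eq:
  assumes "m \<le> k"
  shows "half_gchoose_diff_closed m k
    = (-1) ^ k * (2 powi (int m - 2 * int k) * real m / real (2 * k - m)) * real ((2 * k - m) choose k)"
proof (cases "m = 0")
  case True
  then show ?thesis by (simp add: half_gchoose_diff_closed_def)
next
  case False
  have "2 * int k = int (2 * k)"
    by simp
  then have "(2::real) powi (2 * int k) = 2 ^ (2 * k)"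
    by (simp only: power_int_of_nat)
  then have pow: "(2::real) powi (int m - 2 * int k) = 2 ^ m / 4 ^ k"
    by (simp add: power_int_diff power_mult)
  have "2 * k - m - k = k - m" by simp
  then have choose: "real ((2 * k - m) choose k) = fact (2 * k - m) / (fact k * fact (k - m))"
    using assms by (simp add: binomial_fact)
  obtain r where r: "2 * k - m = Suc r"
    using assms False by (cases "2 * k - m") auto
  then have fact_eq: "(fact (2 * k - m) :: real) = real (2 * k - m) * fact (2 * k - m - 1)"
    by simp
  have "real (2 * k - m) > 0"
    using r by simp
  then show ?thesis
    unfolding half_gchoose_diff_closed_def pow choose fact_eq by (simp add: field_simps)
qed

theorem mainTheorem4:
  fixes k m :: nat
  assumes "k \<ge> 1" and "m \<le> k"
  shows "(\<Sum>j=0..m. (-1::real) ^ j * real (m choose j) * ((real j / 2) gchoose k))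
       = (-1) ^ k * (2 powi (int m - 2 * int k) * real m / real (2 * k - m))
           * real ((2 * k - m) choose k)"
proof -
  have "(\<Sum>j=0..m. (-1::real) ^ j * real (m choose j) * ((real j / 2) gchoose k))
      = half_gchoose_diff m k"
    by (simp add: half_gchoose_diff_def neg_diff_iterate_eq_sum atLeast0AtMost)
  also have "\<dots> = half_gchoose_diff_closed m k"
    using assms by (rule half_gchoose_diff_eq_closed)
  also have "\<dots> = (-1) ^ k * (2 powi (int m - 2 * int k) * real m / real (2 * k - m))
      * real ((2 * k - m) choose k)"
    using assms(2) by (rule half_gchoose_diff_closed_eq)
  finally show ?thesis .
qed

end
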